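(* Let $L=L(f,0)$ be a $3\mathbb Z$-periodic Leibniz algebra over a field $K$ with structure matrix $(\alpha_{ij})_{i,j\in\{0,1,2\}}$. Then $L$ is right nilpotent if and only if $\alpha_{i0}=0$ for $i=0,1,2$, $\alpha_{01}\alpha_{11}\alpha_{21}=\alpha_{02}\alpha_{12}\alpha_{22}=0$, and $\alpha_{01}\alpha_{12}=\alpha_{11}\alpha_{22}=\alpha_{21}\alpha_{02}=0$.
   Context: $L(f,0)$ is the $K$-algebra with basis $\{e_a:a\in\mathbb Z\}$ and multiplication $e_ae_b=f(a,b)e_{a+b}$; it is $3\mathbb Z$-periodic with structure matrix $(\alpha_{ij})$ if $f(a,b)=\alpha_{a\bmod 3,\,b\bmod 3}$; it is Leibniz if $x(yz)=(xy)z-(xz)y$ for all $x,y,z$. An algebra is right nilpotent if there is $N$ with $(\cdots((x_1x_2)x_3)\cdots)x_N=0$ for all $x_1,\dots,x_N$. *)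

theory Defs
  imports Main
begin

text \<open>Elements of L(f,0): finitely supported coefficient functions on the basis (e_a), a in Z.\<close>
definition fsupp :: "(int \<Rightarrow> 'k::zero) set" where
  "fsupp = {x. finite {a. x a \<noteq> 0}}"

text \<open>Bilinear extension of e_a e_b = f(a,b) e_(a+b).\<close>
definition amul :: "(int \<Rightarrow> int \<Rightarrow> 'k::field) \<Rightarrow> (int \<Rightarrow> 'k) \<Rightarrow> (int \<Rightarrow> 'k) \<Rightarrow> (int \<Rightarrow> 'k)" where
  "amul f x y = (\<lambda>c. \<Sum>a\<in>{a. x a \<noteq> 0}. x a * y (c - a) * f a (c - a))"

definition periodic3 :: "(nat \<Rightarrow> nat \<Rightarrow> 'k) \<Rightarrow> int \<Rightarrow> int \<Rightarrow> 'k" where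
  "periodic3 \<alpha> a b = \<alpha> (nat (a mod 3)) (nat (b mod 3))"

definition is_leibniz :: "(int \<Rightarrow> int \<Rightarrow> 'k::field) \<Rightarrow> bool" where
  "is_leibniz f \<longleftrightarrow> (\<forall>x\<in>fsupp. \<forall>y\<in>fsupp. \<forall>z\<in>fsupp.
      amul f x (amul f y z) = amul f (amul f x y) z - amul f (amul f x z) y)"

fun lnprod :: "(int \<Rightarrow> int \<Rightarrow> 'k::field) \<Rightarrow> (int \<Rightarrow> 'k) list \<Rightarrow> (int \<Rightarrow> 'k)" where
  "lnprod f [] = (\<lambda>_. 0)"
| "lnprod f (x # xs) = foldl (amul f) x xs"

definition right_nilpotent :: "(int \<Rightarrow> int \<Rightarrow> 'k::field) \<Rightarrow> bool" where
  "right_nilpotent f \<longleftrightarrow> (\<exists>N\<ge>1. \<forall>xs. length xs = N \<and> set xs \<subseteq> fsupp \<longrightarrow> lnprod f xs = (\<lambda>_. 0))"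

end

theory Submission
  imports Defs
begin

text \<open>A left-normed product of basis vectors e_a e_(b_1) ... e_(b_m) is a multiple of a single
  basis vector, the coefficient being the product of the structure constants met along the walk
  a, a + b_1, a + b_1 + b_2, ... in \<int>; conversely every coefficient of an arbitrary left-normed
  product is a combination of such walk coefficients. Hence L(f,0) is right nilpotent exactly
  when all walks of some fixed length have coefficient 0. For a 3\<int>-periodic f the listed
  conditions say precisely that every walk of length 3 has coefficient 0; if one of them fails,
  it exhibits a closed walk modulo 3 with nonzero coefficient, which can be repeated forever.\<close>

primrec walk_coeff :: "(int \<Rightarrow> int \<Rightarrow> 'k::field) \<Rightarrow> int \<Rightarrow> int list \<Rightarrow> 'k" where
  "walk_coeff f a [] = 1"
| "walk_coeff f a (b # bs) = f a b * walk_coeff f (a + b) bs"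

lemma walk_coeff_append:
  "walk_coeff f a (bs @ cs) = walk_coeff f a bs * walk_coeff f (a + sum_list bs) cs"
  by (induction bs arbitrary: a) (simp_all add: add.assoc mult.assoc)

lemma walk_coeff_append_nonzero_imp:
  "walk_coeff f a (bs @ cs) \<noteq> 0 \<Longrightarrow> walk_coeff f a bs \<noteq> 0"
  by (simp add: walk_coeff_append)

lemma walk_coeff_shift:
  assumes "\<And>x y. f (x + t) y = f x y"
  shows "walk_coeff f (a + t) bs = walk_coeff f a bs"
proof (induction bs arbitrary: a)
  case (Cons b bs)
  have "walk_coeff f (a + t + b) bs = walk_coeff f (a + b) bs"
    using Cons.IH[of "a + b"] by (simp add: ac_simps)
  then show ?case by (simp add: assms)
qed simp

lemma walk_coeff_cycle_power:
  assumes "\<And>x y. f (x + sum_list bs) y = f x y"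
  shows "walk_coeff f a (concat (replicate n bs)) = walk_coeff f a bs ^ n"
proof (induction n)
  case (Suc n)
  have "walk_coeff f (a + sum_list bs) (concat (replicate n bs)) =
        walk_coeff f a (concat (replicate n bs))"
    using walk_coeff_shift[where f = f and t = "sum_list bs", OF assms] .
  with Suc show ?case by (simp add: walk_coeff_append)
qed simp

definition scaled_basis :: "'k::zero \<Rightarrow> int \<Rightarrow> int \<Rightarrow> 'k" where
  "scaled_basis k a = (\<lambda>c. if c = a then k else 0)"

lemma scaled_basis_in_fsupp: "scaled_basis k a \<in> fsupp"
proof -
  have "{c. scaled_basis k a c \<noteq> 0} \<subseteq> {a}" by (auto simp: scaled_basis_def)
  then show ?thesis unfolding fsupp_def by (auto intro: finite_subset)
qed

lemma amul_scaled_basis: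
  "amul f (scaled_basis k a) (scaled_basis 1 b) = scaled_basis (k * f a b) (a + b)"
proof (cases "k = 0")
  case False
  then have "{c. scaled_basis k a c \<noteq> 0} = {a}" by (auto simp: scaled_basis_def)
  then show ?thesis by (auto simp: amul_def scaled_basis_def)
qed (auto simp: amul_def scaled_basis_def fun_eq_iff)

lemma foldl_amul_scaled_basis:
  "foldl (amul f) (scaled_basis k a) (map (scaled_basis 1) bs) =
   scaled_basis (k * walk_coeff f a bs) (a + sum_list bs)"
  by (induction bs arbitrary: k a) (simp_all add: amul_scaled_basis mult.assoc add.assoc)

lemma amul_nonzero_imp:
  assumes "amul f x y c \<noteq> 0"
  shows "\<exists>a. x a \<noteq> 0 \<and> y (c - a) \<noteq> 0 \<and> f a (c - a) \<noteq> 0"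
proof -
  from assms obtain a where "x a \<noteq> 0" "x a * y (c - a) * f a (c - a) \<noteq> 0"
    unfolding amul_def using sum.not_neutral_contains_not_neutral by blast
  then show ?thesis by auto
qed

lemma foldl_amul_nonzero_imp_walk:
  assumes "foldl (amul f) x ys c \<noteq> 0"
  shows "\<exists>a bs. x a \<noteq> 0 \<and> length bs = length ys \<and> a + sum_list bs = c \<and> walk_coeff f a bs \<noteq> 0"
  using assms
proof (induction ys arbitrary: c rule: rev_induct)
  case Nil
  then show ?case by (intro exI[of _ c] exI[of _ "[]"]) simp
next
  case (snoc y ys)
  then obtain c' where c': "foldl (amul f) x ys c' \<noteq> 0" "f c' (c - c') \<noteq> 0"
    using amul_nonzero_imp by fastforce
  with snoc.IH obtain a bs where
    "x a \<noteq> 0" "length bs = length ys" "a + sum_list bs = c'" "walk_coeff f a bs \<noteq> 0"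
    by blast
  with c' show ?case
    by (intro exI[of _ a] exI[of _ "bs @ [c - c']"]) (simp add: walk_coeff_append)
qed

theorem right_nilpotent_iff_walk_coeff_vanishes:
  "right_nilpotent f \<longleftrightarrow> (\<exists>m. \<forall>a bs. length bs = m \<longrightarrow> walk_coeff f a bs = 0)"
proof
  assume "right_nilpotent f"
  then obtain N where "N \<ge> 1"
    and N: "\<And>xs. length xs = N \<Longrightarrow> set xs \<subseteq> fsupp \<Longrightarrow> lnprod f xs = (\<lambda>_. 0)"
    unfolding right_nilpotent_def by blast
  have "walk_coeff f a bs = 0" if "length bs = N - 1" for a bs
  proof -
    let ?xs = "scaled_basis 1 a # map (scaled_basis 1) bs"
    have "lnprod f ?xs = (\<lambda>_. 0)"
      using N[of ?xs] \<open>N \<ge> 1\<close> that scaled_basis_in_fsupp by auto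
    then have "scaled_basis (walk_coeff f a bs) (a + sum_list bs) (a + sum_list bs) = 0"
      by (simp add: foldl_amul_scaled_basis)
    then show ?thesis by (simp add: scaled_basis_def)
  qed
  then show "\<exists>m. \<forall>a bs. length bs = m \<longrightarrow> walk_coeff f a bs = 0" by blast
next
  assume "\<exists>m. \<forall>a bs. length bs = m \<longrightarrow> walk_coeff f a bs = 0"
  then obtain m where m: "\<And>a bs. length bs = m \<Longrightarrow> walk_coeff f a bs = 0" by blast
  have "lnprod f (x # ys) = (\<lambda>_. 0)" if "length ys = m" for x ys
    using foldl_amul_nonzero_imp_walk[of f x ys] m that by fastforce
  then show "right_nilpotent f"
    unfolding right_nilpotent_def by (intro exI[of _ "Suc m"]) (auto simp: length_Suc_conv)
qed

lemma right_nilpotent_cycle_walk_coeff: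
  assumes "right_nilpotent f" "bs \<noteq> []" "\<And>x y. f (x + sum_list bs) y = f x y"
  shows "walk_coeff f a bs = 0"
proof (rule ccontr)
  assume nonzero: "walk_coeff f a bs \<noteq> 0"
  obtain m where m: "\<And>a bs. length bs = m \<Longrightarrow> walk_coeff f a bs = 0"
    using assms(1) right_nilpotent_iff_walk_coeff_vanishes by blast
  let ?long = "concat (replicate m bs)"
  have "m \<le> length ?long"
    using assms(2) by (auto simp: length_concat sum_list_replicate Suc_le_eq)
  then have "?long = take m ?long @ drop m ?long" "length (take m ?long) = m" by simp_all
  moreover have "walk_coeff f a ?long \<noteq> 0"
    using nonzero by (simp add: walk_coeff_cycle_power[where f = f, OF assms(3)])
  ultimately show False
    using m walk_coeff_append_nonzero_imp by metis
qed

lemma periodic3_add_dvd: "3 dvd t \<Longrightarrow> periodic3 \<alpha> (a + t) b = periodic3 \<alpha> a b"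
  by (auto simp: periodic3_def elim!: dvdE)

lemma nat_mod_add: "nat ((a + b) mod m) = (nat (a mod m) + nat (b mod m)) mod nat m"
  if "0 < m" for a b m :: int
proof -
  have "(a + b) mod m = (a mod m + b mod m) mod m" by (simp add: mod_add_eq)
  with that show ?thesis by (simp add: nat_mod_distrib nat_add_distrib)
qed

lemma periodic3_walk_coeff_length3:
  "walk_coeff (periodic3 \<alpha>) a [b, c, d] =
   \<alpha> i j * \<alpha> ((i + j) mod 3) k * \<alpha> ((i + j + k) mod 3) l"
  if "i = nat (a mod 3)" "j = nat (b mod 3)" "k = nat (c mod 3)" "l = nat (d mod 3)"
proof -
  have "nat ((a + b) mod 3) = (i + j) mod 3" "nat ((a + b + c) mod 3) = (i + j + k) mod 3"
    using that by (simp_all add: nat_mod_add mod_add_left_eq)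
  with that show ?thesis by (simp add: periodic3_def mult.assoc)
qed

lemma residue_walk_product_eq_0:
  fixes \<alpha> :: "nat \<Rightarrow> nat \<Rightarrow> 'k::field"
  assumes "\<forall>i\<in>{0,1,2}. \<alpha> i 0 = 0"
    and "\<alpha> 0 1 * \<alpha> 1 1 * \<alpha> 2 1 = 0" "\<alpha> 0 2 * \<alpha> 1 2 * \<alpha> 2 2 = 0"
    and "\<alpha> 0 1 * \<alpha> 1 2 = 0" "\<alpha> 1 1 * \<alpha> 2 2 = 0" "\<alpha> 2 1 * \<alpha> 0 2 = 0"
    and "i \<in> {0, 1, 2}" "j \<in> {0, 1, 2}" "k \<in> {0, 1, 2}" "l \<in> {0, 1, 2}"
  shows "\<alpha> i j * \<alpha> ((i + j) mod 3) k * \<alpha> ((i + j + k) mod 3) l = 0"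
proof -
  have column0: "\<alpha> 0 0 = 0" "\<alpha> 1 0 = 0" "\<alpha> 2 0 = 0"
    using assms(1) by auto
  have pairs: "\<alpha> 0 1 = 0 \<or> \<alpha> 1 1 = 0 \<or> \<alpha> 2 1 = 0" "\<alpha> 0 2 = 0 \<or> \<alpha> 1 2 = 0 \<or> \<alpha> 2 2 = 0"
      "\<alpha> 0 1 = 0 \<or> \<alpha> 1 2 = 0" "\<alpha> 1 1 = 0 \<or> \<alpha> 2 2 = 0" "\<alpha> 2 1 = 0 \<or> \<alpha> 0 2 = 0"
    using assms(2-6) by auto
  from assms(7-10) show ?thesis
    apply (elim insertE emptyE)
    apply (simp_all add: numeral_2_eq_2 column0[unfolded numeral_2_eq_2 One_nat_def])
    apply (insert pairs[unfolded numeral_2_eq_2 One_nat_def])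
    by blast+
qed

lemma periodic3_walk_coeff_length3_eq_0:
  fixes \<alpha> :: "nat \<Rightarrow> nat \<Rightarrow> 'k::field"
  assumes "\<forall>i\<in>{0,1,2}. \<alpha> i 0 = 0"
    and "\<alpha> 0 1 * \<alpha> 1 1 * \<alpha> 2 1 = 0" "\<alpha> 0 2 * \<alpha> 1 2 * \<alpha> 2 2 = 0"
    and "\<alpha> 0 1 * \<alpha> 1 2 = 0" "\<alpha> 1 1 * \<alpha> 2 2 = 0" "\<alpha> 2 1 * \<alpha> 0 2 = 0"
  shows "walk_coeff (periodic3 \<alpha>) a [b, c, d] = 0"
proof -
  have residue: "nat (x mod 3) \<in> {0, 1, 2}" for x :: int
  proof -
    have "x mod 3 \<in> {0, 1, 2}" by auto
    then show ?thesis by auto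
  qed
  show ?thesis
    unfolding periodic3_walk_coeff_length3[OF refl refl refl refl]
    by (rule residue_walk_product_eq_0[OF assms residue residue residue residue])
qed

theorem corollary4p8:
  fixes \<alpha> :: "nat \<Rightarrow> nat \<Rightarrow> 'k::field"
  assumes "is_leibniz (periodic3 \<alpha>)"
  shows "right_nilpotent (periodic3 \<alpha>) \<longleftrightarrow>
    ((\<forall>i\<in>{0,1,2}. \<alpha> i 0 = 0) \<and>
     \<alpha> 0 1 * \<alpha> 1 1 * \<alpha> 2 1 = 0 \<and> \<alpha> 0 2 * \<alpha> 1 2 * \<alpha> 2 2 = 0 \<and>
     \<alpha> 0 1 * \<alpha> 1 2 = 0 \<and> \<alpha> 1 1 * \<alpha> 2 2 = 0 \<and> \<alpha> 2 1 * \<alpha> 0 2 = 0)"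
  (is "?nilpotent \<longleftrightarrow> ?conditions")
proof
  assume ?nilpotent
  have cycle: "walk_coeff (periodic3 \<alpha>) a bs = 0"
    if "bs \<noteq> []" "3 dvd sum_list bs" for a bs
    using right_nilpotent_cycle_walk_coeff[OF \<open>?nilpotent\<close> \<open>bs \<noteq> []\<close>] that(2)
    by (simp add: periodic3_add_dvd)
  have "\<alpha> i 0 = 0" if "i \<in> {0, 1, 2}" for i
    using cycle[of "[0]" "int i"] that by (auto simp: periodic3_def)
  moreover have "\<alpha> 0 1 * \<alpha> 1 1 * \<alpha> 2 1 = 0" "\<alpha> 0 2 * \<alpha> 1 2 * \<alpha> 2 2 = 0"
    using cycle[of "[1, 1, 1]" 0] cycle[of "[2, 2, 2]" 0] by (auto simp: periodic3_def)
  moreover have "\<alpha> 0 1 * \<alpha> 1 2 = 0" "\<alpha> 1 1 * \<alpha> 2 2 = 0" "\<alpha> 2 1 * \<alpha> 0 2 = 0"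
    using cycle[of "[1, 2]" 0] cycle[of "[1, 2]" 1] cycle[of "[1, 2]" 2]
    by (simp_all add: periodic3_def)
  ultimately show ?conditions by blast
next
  assume ?conditions
  then have "walk_coeff (periodic3 \<alpha>) a bs = 0" if "length bs = 3" for a bs
    using that periodic3_walk_coeff_length3_eq_0[of \<alpha>]
    by (auto simp: numeral_3_eq_3 length_Suc_conv)
  then show ?nilpotent
    using right_nilpotent_iff_walk_coeff_vanishes by blast
qed

end
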